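(* In the setting of the context, the four functions $u=H_{2n}$, $v=H_{2n+1}$, $f=S^{[1]}_{2n}$, $g=S^{[1]}_{2n+1}$ satisfy the following three systems of nonlinear difference equations. (1) For the shifts $\hat{}\,$, $\tilde{}\,$, $\bar{}\,$: \begin{align*} g(\tilde{f}-\hat{f})+\tilde{g}(\tilde{\hat{f}}-\tilde{f})+\hat{g}(\hat{f}-\hat{\tilde{f}})&=\frac{1}{\tilde{d}}\left(\frac{\hat{\bar {u}}}{\hat{\tilde{u}}}-\frac{\bar {u}}{\tilde{u}}\right)+\frac{1}{\hat{d}}\left(\frac{\bar {u}}{\hat{u}}-\frac{\tilde{\bar {u}}}{\tilde{\hat{u}}}\right),\\ \bar {f}(\hat{g}-\tilde{g})+\tilde{\bar{f}}(\tilde{g}-\tilde{\hat{g}})+\hat{\bar {f}}(\hat{\tilde{g}}-\hat{g})&= \frac{1}{\tilde{d}}\left(\frac{\bar {v}}{\tilde{v}}-\frac{\hat{\bar {v}}}{\hat{\tilde{v}}}\right),\\ \frac{1}{\tilde{d}}\frac{\hat{\bar {u}}}{\hat{\tilde{u}}}(\hat{\bar {f}}-\bar {f})+\frac{1}{\hat{d}}\frac{\tilde{\bar {u}}}{\tilde{\hat{u}}}(\bar {f}-\tilde{\bar {f}})+\frac{1}{\tilde{d}}\frac{\bar {v}}{\tilde{v}}(\tilde{f}-\tilde{\hat{f}})&=0,\\ \frac{1}{\hat{d}}\frac{\bar {\bar {u}}}{\hat{\bar {u}}}(\hat{g}-\hat{\tilde{g}})+\frac{1}{\tilde{d}}\frac{\bar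 {\bar {u}}}{\tilde{\bar {u}}}(\tilde{\hat{g}}-\tilde{g})+\frac{1}{\tilde{d}}\frac{\hat{\bar {v}}}{\hat{\tilde{v}}}(\bar {g}-\hat{\bar {g}})&=0. \end{align*} (2) For the shifts $\check{}\,$, $\tilde{}\,$, $\bar{}\,$: \begin{align*} g(\tilde{f}-\check{f})+\tilde{g}(\check{\tilde{f}}-\tilde{f})+\check{g}(\check{f}-\check{\tilde{f}})&=\frac{1}{\tilde{d}}\left(\frac{\check{\bar {u}}}{\check{\tilde{u}}}-\frac{\bar {u}}{\tilde{u}}\right),\\ \bar {f}(\tilde{g}-\check{g})+\tilde{\bar {f}}(\tilde{\check{g}}-\tilde{g})+\check{\bar {f}}(\check{g}-\check{\tilde{g}})&= \frac{1}{\tilde{d}}\left(\frac{\check{\bar {v}}}{\check{\tilde{v}}}-\frac{\bar {v}}{\tilde{v}}\right)+\frac{1}{\check{d}}\left(\frac{\bar {v}}{\check{v}}-\frac{\tilde{\bar {v}}}{\check{\tilde{v}}}\right),\\ \frac{1}{\tilde{d}}\frac{\check{\bar {u}}}{\check{\tilde{u}}}(\bar {f}-\check{\bar {f}})+\frac{1}{\check{d}}\frac{\bar {v}}{\check{v}}(\check{f}-\check{\tilde{f}})+\frac{1}{\tilde{d}}\frac{\bar {v}}{\tilde{v}}(\tilde{\check{f}}-\tilde{f})&=0,\\ \frac{1}{\tilde{d}}\frac{\bar {\bar {u}}}{\tilde{\bar {u}}}(\tilde{g}-\tilde{\check{g}}) +\frac{1}{\check{d}}\frac{\tilde{\bar {v}}}{\tilde{\check{v}}}(\bar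 {g}-\tilde{\bar {g}})+\frac{1}{\tilde{d}}\frac{\check{\bar {v}}}{\check{\tilde{v}}}(\check{\bar {g}}-\bar {g})&=0. \end{align*} (3) For the shifts $\hat{}\,$, $\check{}\,$, $\bar{}\,$: \begin{align*} \frac{1}{\hat d}\frac{\check{\bar {u}}}{\check{\hat{u}}}(\bar {f}-\check{\bar {f}})+\frac{1}{\check d}\frac{\bar {v}}{\check{v}}(\check{f}-\check{\hat{f}})&=0,\\ \frac{1}{\hat d}\frac{\bar {\bar {u}}}{\hat{\bar {u}}}(\hat{\check{g}}-\hat{g})+\frac{1}{\check d}\frac{\hat{\bar {v}}}{\check{\hat{v}}}(\hat{\bar {g}}-\bar {g})&= 0,\\ g(\check{f}-\hat{f})+\check{g}(\check{\hat{f}}-\check{f})+\hat{g}(\hat{f}-\check{\hat{f}})&=\frac{1}{\hat{d}}\left(\frac{\bar {u}}{\hat{u}}-\frac{\check{\bar {u}}}{\hat{\check{u}}}\right),\\ \bar {f}(\check{g}-\hat{g})+\check{\bar {f}}(\check{\hat{g}}-{\check{g}})+\hat{\bar {f}}(\hat{g}-\check{\hat{g}})&=\frac{1}{\check{d}}\left(\frac{\hat{\bar {v}}}{\check{\hat{v}}}-\frac{\bar {v}}{\check{v}}\right). \end{align*}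
   Context: Fix $N,M^{(1)},M^{(2)}\in\mathbb N_0$, parameters $b^{(a)}_i$ ($a\in\{1,2\}$, $1\le i\le M^{(a)}$), $c_j$ ($1\le j\le N$), $\eta^{(1)},\eta^{(2)}$, and hypergeometric weights on $\mathbb N_0$: $w^{(a)}(k)=\frac{(b^{(a)}_1)_k\cdots(b^{(a)}_{M^{(a)}})_k}{(c_1)_k\cdots(c_N)_k}\frac{(\eta^{(a)})^k}{k!}$, with $(b)_k$ the Pochhammer symbol. The moment matrix $\mathscr M$ (indices from $0$) has entries $\mathscr M_{n,2m}=\sum_{k\ge0}k^{n+m}w^{(1)}(k)$, $\mathscr M_{n,2m+1}=\sum_{k\ge0}k^{n+m}w^{(2)}(k)$. It is assumed that for all parameter values considered (including the shifted ones below) the series converge and all leading principal minors $\tau_n$ of $\mathscr M$ are nonzero, so that $\mathscr M=S^{-1}H\tilde S^{-\top}$ with $S,\tilde S$ lower unitriangular semi-infinite matrices and $H=\operatorname{diag}(H_0,H_1,\dots)$. Write $S=I+\Lambda^\top S^{[1]}+(\Lambda^\top)^2S^{[2]}+\cdots$ with $\Lambda$ the shift matrix (ones on the first superdiagonal) and $S^{[k]}=\operatorname{diag}(S^{[k]}_0,S^{[k]}_1,\dots)$; thus $S^{[1]}_n$ is the coefficient of $x^{n}$ in the monic type II multiple orthogonal polynomial $B_{n+1}$ given by the entries of $SX(x)$, $X(x)=(1,x,x^2,\dots)^\top$. Shift notation for a function $u$ of $n$ and the parameters: $\hat u$ is $u$ with one fixed parameter $b^{(1)}_r$ replaced by $b^{(1)}_r+1$,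 and $\hat d:=b^{(1)}_r$; $\check u$ is $u$ with one fixed parameter $b^{(2)}_q$ replaced by $b^{(2)}_q+1$, and $\check d:=b^{(2)}_q$; $\tilde u$ is $u$ with one fixed parameter $c_s$ replaced by $c_s-1$, and $\tilde d:=c_s-1$; $\bar u$ is $u$ with $n$ replaced by $n+2$. Combined symbols denote the composition of the corresponding shifts. *)

theory Defs
  imports "Jordan_Normal_Form.Determinant"
begin

definition hweight :: "complex list \<Rightarrow> complex list \<Rightarrow> complex \<Rightarrow> nat \<Rightarrow> complex" where
  "hweight bs cs eta k =
     (\<Prod>b\<leftarrow>bs. pochhammer b k) / (\<Prod>c\<leftarrow>cs. pochhammer c k) * eta ^ k / fact k"

definition mom_term :: "complex list \<Rightarrow> complex list \<Rightarrow> complex list \<Rightarrow> complex \<Rightarrow> complex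
    \<Rightarrow> nat \<Rightarrow> nat \<Rightarrow> nat \<Rightarrow> complex" where
  "mom_term b1 b2 cs e1 e2 i j k =
     (if even j then of_nat k ^ (i + j div 2) * hweight b1 cs e1 k
      else of_nat k ^ (i + j div 2) * hweight b2 cs e2 k)"

definition moment :: "complex list \<Rightarrow> complex list \<Rightarrow> complex list \<Rightarrow> complex \<Rightarrow> complex
    \<Rightarrow> nat \<Rightarrow> nat \<Rightarrow> complex" where
  "moment b1 b2 cs e1 e2 i j = (\<Sum>k. mom_term b1 b2 cs e1 e2 i j k)"

definition tau :: "(nat \<Rightarrow> nat \<Rightarrow> complex) \<Rightarrow> nat \<Rightarrow> complex" where
  "tau M n = det (mat n n (\<lambda>(i, j). M i j))"

text \<open>Gauss--Borel factorization M = S^{-1} H St^{-T} with S, St lower unitriangular and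
  H diagonal, written in the equivalent form S M St^T = H (all sums are finite because
  S and St are lower triangular).\<close>
definition is_gauss_borel ::
  "(nat \<Rightarrow> nat \<Rightarrow> complex) \<Rightarrow> (nat \<Rightarrow> nat \<Rightarrow> complex) \<Rightarrow> (nat \<Rightarrow> complex)
     \<Rightarrow> (nat \<Rightarrow> nat \<Rightarrow> complex) \<Rightarrow> bool" where
  "is_gauss_borel M S H St \<longleftrightarrow>
     (\<forall>i j. i < j \<longrightarrow> S i j = 0) \<and> (\<forall>i. S i i = 1) \<and>
     (\<forall>i j. i < j \<longrightarrow> St i j = 0) \<and> (\<forall>i. St i i = 1) \<and>
     (\<forall>i j. (\<Sum>l\<le>j. \<Sum>k\<le>i. S i k * M k l * St j l) = (if i = j then H i else 0))"

definition gauss_borel :: "(nat \<Rightarrow> nat \<Rightarrow> complex)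
    \<Rightarrow> (nat \<Rightarrow> nat \<Rightarrow> complex) \<times> (nat \<Rightarrow> complex) \<times> (nat \<Rightarrow> nat \<Rightarrow> complex)" where
  "gauss_borel M = (THE (S, H, St). is_gauss_borel M S H St)"

text \<open>H_m (diagonal entry of H) and S^{[1]}_m = S_{m+1,m}, the coefficient of x^m in B_{m+1}.\<close>
definition GB_H :: "(nat \<Rightarrow> nat \<Rightarrow> complex) \<Rightarrow> nat \<Rightarrow> complex" where
  "GB_H M m = fst (snd (gauss_borel M)) m"

definition GB_S1 :: "(nat \<Rightarrow> nat \<Rightarrow> complex) \<Rightarrow> nat \<Rightarrow> complex" where
  "GB_S1 M m = fst (gauss_borel M) (Suc m) m"

definition standing_assms :: "complex list \<Rightarrow> complex list \<Rightarrow> complex list \<Rightarrow> complex \<Rightarrow> complex \<Rightarrow> bool" where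
  "standing_assms b1 b2 cs e1 e2 \<longleftrightarrow>
     (\<forall>k. (\<Prod>c\<leftarrow>cs. pochhammer c k) \<noteq> 0) \<and>
     (\<forall>i j. summable (mom_term b1 b2 cs e1 e2 i j)) \<and>
     (\<forall>n. tau (moment b1 b2 cs e1 e2) n \<noteq> 0)"

end

theory Submission
  imports Defs
begin

(* Changing b^(1)_r to b^(1)_r + 1, b^(2)_q to b^(2)_q + 1 or c_s to c_s - 1 multiplies the weight
   by 1 + k/d. Since column l + 2 of the moment matrix is column l multiplied by k, the shifted moment
   matrix is obtained by adding c_l times column l + 2 to every column l, where c_l = 1/d on the even
   columns, on the odd columns, or on all columns, respectively. For the Gauss-Borel factorizations
   this gives a three-term connection formula: row i + 2 of S is row i + 2 of the shifted S plus
   multiples of its rows i + 1 and i, the last coefficient being c_i H_(i+2) / H'_i. Two shifts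
   commute, so the connection formulas can be composed along both routes around a square of
   parameter values; comparing the entries (i + 2, i) and (i + 3, i) obtained along the two routes
   gives two identities for every i, and i = 2n, 2n + 1 give the four equations of each system. *)

section \<open>Nonsingular leading principal minors\<close>

lemma det_mat_transposed_entries:
  "det (mat n n (\<lambda>(i, j). M j i)) = det (mat n n (\<lambda>(i, j). M i j))"
proof -
  have "mat n n (\<lambda>(i, j). M j i) = transpose_mat (mat n n (\<lambda>(i, j). M i j))"
    by (rule eq_matI) auto
  then show ?thesis
    by (simp add: det_transpose[of _ n])
qed

lemma mat_mult_vec_nth:
  "k < n \<Longrightarrow> (mat n n (\<lambda>(i, j). M i j) *\<^sub>v vec n y) $ k = (\<Sum>l<n. M k l * y l)"
  by (simp add: scalar_prod_def row_def atLeast0LessThan)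

lemma det_nonzero_right_null:
  fixes M :: "nat \<Rightarrow> nat \<Rightarrow> 'a :: field"
  assumes det: "det (mat n n (\<lambda>(i, j). M i j)) \<noteq> 0"
    and null: "\<forall>k<n. (\<Sum>l<n. M k l * y l) = 0"
  shows "\<forall>l<n. y l = 0"
proof -
  have "mat n n (\<lambda>(i, j). M i j) *\<^sub>v vec n y = 0\<^sub>v n"
    by (rule eq_vecI) (use mat_mult_vec_nth[of _ n M y] null in auto)
  then have "vec n y = 0\<^sub>v n"
    using det det_0_iff_vec_prod_zero_field[OF mat_carrier[of n n "\<lambda>(i, j). M i j"]] vec_carrier[of n y]
    by blast
  then show ?thesis
    by (metis index_vec index_zero_vec(1))
qed

lemma det_nonzero_left_null:
  fixes M :: "nat \<Rightarrow> nat \<Rightarrow> 'a :: field"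
  assumes "det (mat n n (\<lambda>(i, j). M i j)) \<noteq> 0"
    and "\<forall>l<n. (\<Sum>k<n. y k * M k l) = 0"
  shows "\<forall>k<n. y k = 0"
  using det_nonzero_right_null[of n "\<lambda>i j. M j i" y] assms det_mat_transposed_entries[of n M]
  by (simp add: mult.commute)

lemma det_nonzero_right_solvable:
  fixes M :: "nat \<Rightarrow> nat \<Rightarrow> 'a :: field"
  assumes det: "det (mat n n (\<lambda>(i, j). M i j)) \<noteq> 0"
  shows "\<exists>y. \<forall>k<n. (\<Sum>l<n. M k l * y l) = b k"
proof -
  let ?A = "mat n n (\<lambda>(i, j). M i j)"
  obtain B where B: "B \<in> carrier_mat n n" "?A * B = 1\<^sub>m n"
    using det_non_zero_imp_unit[OF mat_carrier det, of "()"] by (auto simp: Units_def ring_mat_def)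
  define w where "w = B *\<^sub>v vec n b"
  have "?A *\<^sub>v w = (?A * B) *\<^sub>v vec n b"
    unfolding w_def by (rule assoc_mult_mat_vec[symmetric]) (use B in auto)
  with B(2) have Aw: "?A *\<^sub>v w = vec n b"
    by simp
  have "(\<Sum>l<n. M k l * w $ l) = b k" if "k < n" for k
  proof -
    have "(?A *\<^sub>v w) $ k = (\<Sum>l<n. M k l * w $ l)"
      using that B(1) by (simp add: w_def scalar_prod_def row_def atLeast0LessThan)
    then show ?thesis
      using Aw that by simp
  qed
  then show ?thesis
    by blast
qed

lemma det_nonzero_left_solvable:
  fixes M :: "nat \<Rightarrow> nat \<Rightarrow> 'a :: field"
  assumes "det (mat n n (\<lambda>(i, j). M i j)) \<noteq> 0"
  shows "\<exists>y. \<forall>l<n. (\<Sum>k<n. y k * M k l) = b l"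
  using det_nonzero_right_solvable[of n "\<lambda>i j. M j i" b] assms det_mat_transposed_entries[of n M]
  by (simp add: mult.commute)

lemma sum_atMost_split_top: "(\<Sum>k\<le>(i::nat). F k) = F i + (\<Sum>k<i. F k)"
  by (simp add: lessThan_Suc_atMost[symmetric] add.commute)

section \<open>Gauss--Borel factorization\<close>

lemma
  assumes "is_gauss_borel M S H St"
  shows is_gauss_borel_S_upper: "i < k \<Longrightarrow> S i k = 0"
    and is_gauss_borel_S_diag: "S i i = 1"
    and is_gauss_borel_St_upper: "i < k \<Longrightarrow> St i k = 0"
    and is_gauss_borel_St_diag: "St i i = 1"
    and is_gauss_borel_product:
      "(\<Sum>l\<le>j. \<Sum>k\<le>i. S i k * M k l * St j l) = (if i = j then H i else 0)"
  using assms unfolding is_gauss_borel_def by blast+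

lemma is_gauss_borel_SM_lower:
  assumes gb: "is_gauss_borel M S H St"
  shows "l < i \<Longrightarrow> (\<Sum>k\<le>i. S i k * M k l) = 0"
proof (induction l rule: less_induct)
  case (less l)
  have "(\<Sum>l'\<le>l. (\<Sum>k\<le>i. S i k * M k l') * St l l') = 0"
    using is_gauss_borel_product[OF gb, where i=i and j=l] less.prems by (simp add: sum_distrib_right)
  moreover have "(\<Sum>l'<l. (\<Sum>k\<le>i. S i k * M k l') * St l l') = 0"
    using less.IH less.prems by (intro sum.neutral) auto
  ultimately show ?case
    by (simp add: sum_atMost_split_top is_gauss_borel_St_diag[OF gb])
qed

lemma is_gauss_borel_SM_diag:
  assumes gb: "is_gauss_borel M S H St"
  shows "(\<Sum>k\<le>i. S i k * M k i) = H i"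
proof -
  have "(\<Sum>l\<le>i. (\<Sum>k\<le>i. S i k * M k l) * St i l) = H i"
    using is_gauss_borel_product[OF gb, where i=i and j=i] by (simp add: sum_distrib_right)
  moreover have "(\<Sum>l<i. (\<Sum>k\<le>i. S i k * M k l) * St i l) = 0"
    using is_gauss_borel_SM_lower[OF gb] by (intro sum.neutral) auto
  ultimately show ?thesis
    by (simp add: sum_atMost_split_top is_gauss_borel_St_diag[OF gb])
qed

lemma is_gauss_borel_MSt_upper:
  assumes gb: "is_gauss_borel M S H St"
  shows "k < j \<Longrightarrow> (\<Sum>l\<le>j. M k l * St j l) = 0"
proof (induction k rule: less_induct)
  case (less k)
  have "(\<Sum>k'\<le>k. S k k' * (\<Sum>l\<le>j. M k' l * St j l)) = 0"
    using is_gauss_borel_product[OF gb, where i=k and j=j] less.prems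
    by (simp add: sum_distrib_left sum.swap[of _ "{..j}"] mult.assoc)
  moreover have "(\<Sum>k'<k. S k k' * (\<Sum>l\<le>j. M k' l * St j l)) = 0"
    using less.IH less.prems by (intro sum.neutral) auto
  ultimately show ?case
    by (simp add: sum_atMost_split_top is_gauss_borel_S_diag[OF gb])
qed

lemma is_gauss_borel_H_nonzero:
  assumes tau: "tau M (Suc i) \<noteq> 0" and gb: "is_gauss_borel M S H St"
  shows "H i \<noteq> 0"
proof
  assume "H i = 0"
  then have "\<forall>l<Suc i. (\<Sum>k<Suc i. S i k * M k l) = 0"
    using is_gauss_borel_SM_lower[OF gb, of _ i] is_gauss_borel_SM_diag[OF gb, of i]
    by (auto simp: lessThan_Suc_atMost less_Suc_eq)
  with tau have "S i i = 0"
    unfolding tau_def by (blast dest: det_nonzero_left_null)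
  then show False
    by (simp add: is_gauss_borel_S_diag[OF gb])
qed

lemma is_gauss_borel_S_unique:
  fixes M :: "nat \<Rightarrow> nat \<Rightarrow> complex"
  assumes tau: "\<forall>n. tau M n \<noteq> 0"
    and gb: "is_gauss_borel M S H St" and gb': "is_gauss_borel M S' H' St'"
  shows "S i k = S' i k"
proof (cases "k < i")
  case True
  have "\<forall>l<i. (\<Sum>k'<i. (S i k' - S' i k') * M k' l) = 0"
  proof (intro allI impI)
    fix l
    assume "l < i"
    then have "(\<Sum>k'\<le>i. S i k' * M k' l) - (\<Sum>k'\<le>i. S' i k' * M k' l) = 0"
      by (simp add: is_gauss_borel_SM_lower[OF gb] is_gauss_borel_SM_lower[OF gb'])
    then show "(\<Sum>k'<i. (S i k' - S' i k') * M k' l) = 0"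
      by (simp add: sum_atMost_split_top is_gauss_borel_S_diag[OF gb] is_gauss_borel_S_diag[OF gb']
          sum_subtractf left_diff_distrib)
  qed
  from det_nonzero_left_null[OF tau[rule_format, of i, unfolded tau_def] this] True show ?thesis
    by simp
next
  case False
  then show ?thesis
    by (cases "k = i") (simp_all add: is_gauss_borel_S_upper[OF gb] is_gauss_borel_S_upper[OF gb']
        is_gauss_borel_S_diag[OF gb] is_gauss_borel_S_diag[OF gb'])
qed

lemma is_gauss_borel_St_unique:
  fixes M :: "nat \<Rightarrow> nat \<Rightarrow> complex"
  assumes tau: "\<forall>n. tau M n \<noteq> 0"
    and gb: "is_gauss_borel M S H St" and gb': "is_gauss_borel M S' H' St'"
  shows "St j l = St' j l"
proof (cases "l < j")
  case True
  have "\<forall>k<j. (\<Sum>l'<j. M k l' * (St j l' - St' j l')) = 0"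
  proof (intro allI impI)
    fix k
    assume "k < j"
    then have "(\<Sum>l'\<le>j. M k l' * St j l') - (\<Sum>l'\<le>j. M k l' * St' j l') = 0"
      by (simp add: is_gauss_borel_MSt_upper[OF gb] is_gauss_borel_MSt_upper[OF gb'])
    then show "(\<Sum>l'<j. M k l' * (St j l' - St' j l')) = 0"
      by (simp add: sum_atMost_split_top is_gauss_borel_St_diag[OF gb] is_gauss_borel_St_diag[OF gb']
          sum_subtractf right_diff_distrib)
  qed
  from det_nonzero_right_null[OF tau[rule_format, of j, unfolded tau_def] this] True show ?thesis
    by simp
next
  case False
  then show ?thesis
    by (cases "l = j") (simp_all add: is_gauss_borel_St_upper[OF gb] is_gauss_borel_St_upper[OF gb']
        is_gauss_borel_St_diag[OF gb] is_gauss_borel_St_diag[OF gb'])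
qed

lemma is_gauss_borel_unique:
  fixes M :: "nat \<Rightarrow> nat \<Rightarrow> complex"
  assumes "\<forall>n. tau M n \<noteq> 0" and gb: "is_gauss_borel M S H St" and gb': "is_gauss_borel M S' H' St'"
  shows "S = S' \<and> H = H' \<and> St = St'"
proof (intro conjI ext)
  show S: "S i k = S' i k" for i k
    using is_gauss_borel_S_unique[OF assms] .
  show "St j l = St' j l" for j l
    using is_gauss_borel_St_unique[OF assms] .
  show "H i = H' i" for i
    using is_gauss_borel_SM_diag[OF gb, of i] is_gauss_borel_SM_diag[OF gb', of i] S by simp
qed

lemma is_gauss_borelI:
  assumes S_upper: "\<And>i k. i < k \<Longrightarrow> S i k = 0" and S_diag: "\<And>i. S i i = 1"
    and St_upper: "\<And>j l. j < l \<Longrightarrow> St j l = 0" and St_diag: "\<And>j. St j j = 1"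
    and SM_lower: "\<And>i l. l < i \<Longrightarrow> (\<Sum>k\<le>i. S i k * M k l) = 0"
    and MSt_upper: "\<And>k j. k < j \<Longrightarrow> (\<Sum>l\<le>j. M k l * St j l) = 0"
  shows "is_gauss_borel M S (\<lambda>i. \<Sum>k\<le>i. S i k * M k i) St"
  unfolding is_gauss_borel_def
proof (intro conjI allI impI S_upper S_diag St_upper St_diag)
  fix i j
  have left: "(\<Sum>l\<le>j. \<Sum>k\<le>i. S i k * M k l * St j l) = (\<Sum>l\<le>j. (\<Sum>k\<le>i. S i k * M k l) * St j l)"
    by (simp add: sum_distrib_right)
  have right: "(\<Sum>l\<le>j. \<Sum>k\<le>i. S i k * M k l * St j l) = (\<Sum>k\<le>i. S i k * (\<Sum>l\<le>j. M k l * St j l))"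
    by (simp add: sum_distrib_left sum.swap[of _ "{..j}"] mult.assoc)
  consider "j < i" | "i < j" | "i = j"
    by linarith
  then show "(\<Sum>l\<le>j. \<Sum>k\<le>i. S i k * M k l * St j l) = (if i = j then \<Sum>k\<le>i. S i k * M k i else 0)"
  proof cases
    case 1
    then show ?thesis
      unfolding left by (simp add: SM_lower)
  next
    case 2
    then show ?thesis
      unfolding right by (simp add: MSt_upper)
  next
    case 3
    then show ?thesis
      unfolding left sum_atMost_split_top[of "\<lambda>l. (\<Sum>k\<le>i. S i k * M k l) * St j l"]
      by (simp add: SM_lower St_diag)
  qed
qed

lemma is_gauss_borel_exists:
  fixes M :: "nat \<Rightarrow> nat \<Rightarrow> complex"
  assumes tau: "\<forall>n. tau M n \<noteq> 0"
  shows "\<exists>S H St. is_gauss_borel M S H St"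
proof -
  have "\<forall>i. \<exists>y. \<forall>l<i. (\<Sum>k<i. y k * M k l) = - M i l"
    using tau by (intro allI det_nonzero_left_solvable) (simp add: tau_def)
  then obtain ys where ys: "\<forall>i. \<forall>l<i. (\<Sum>k<i. ys i k * M k l) = - M i l"
    by (auto dest!: choice)
  have "\<forall>j. \<exists>z. \<forall>k<j. (\<Sum>l<j. M k l * z l) = - M k j"
    using tau by (intro allI det_nonzero_right_solvable) (simp add: tau_def)
  then obtain zs where zs: "\<forall>j. \<forall>k<j. (\<Sum>l<j. M k l * zs j l) = - M k j"
    by (auto dest!: choice)
  define S where "S i k = (if k < i then ys i k else if k = i then 1 else 0)" for i k
  define St where "St j l = (if l < j then zs j l else if l = j then 1 else 0)" for j l
  have "is_gauss_borel M S (\<lambda>i. \<Sum>k\<le>i. S i k * M k i) St"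
  proof (rule is_gauss_borelI)
    show "(\<Sum>k\<le>i. S i k * M k l) = 0" if "l < i" for i l
      using ys that by (simp add: sum_atMost_split_top S_def)
    show "(\<Sum>l\<le>j. M k l * St j l) = 0" if "k < j" for k j
      using zs that by (simp add: sum_atMost_split_top St_def)
  qed (simp_all add: S_def St_def)
  then show ?thesis
    by blast
qed

lemma is_gauss_borel_gauss_borel:
  fixes M :: "nat \<Rightarrow> nat \<Rightarrow> complex"
  assumes "\<forall>n. tau M n \<noteq> 0"
  shows "is_gauss_borel M (fst (gauss_borel M)) (GB_H M) (snd (snd (gauss_borel M)))"
proof -
  obtain S H St where gb: "is_gauss_borel M S H St"
    using is_gauss_borel_exists[OF assms] by blast
  have "gauss_borel M = (S, H, St)"
    unfolding gauss_borel_def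
  proof (rule the_equality)
    fix x
    assume "case x of (S', H', St') \<Rightarrow> is_gauss_borel M S' H' St'"
    then show "x = (S, H, St)"
      using is_gauss_borel_unique[OF assms gb] by (cases x) auto
  qed (simp add: gb)
  with gb show ?thesis
    by (simp add: GB_H_def[abs_def])
qed

lemma is_gauss_borel_SM_atMost:
  assumes gb: "is_gauss_borel M S H St" and "r \<le> N" "l \<le> r"
  shows "(\<Sum>k\<le>N. S r k * M k l) = (if l = r then H r else 0)"
proof -
  have "(\<Sum>k\<le>N. S r k * M k l) = (\<Sum>k\<le>r. S r k * M k l)"
    using assms(2) by (intro sum.mono_neutral_right) (auto simp: is_gauss_borel_S_upper[OF gb])
  then show ?thesis
    using assms(3) by (simp add: is_gauss_borel_SM_lower[OF gb] is_gauss_borel_SM_diag[OF gb])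
qed

section \<open>Connection formulas for a perturbed moment matrix\<close>

lemma is_gauss_borel_perturbed_SM:
  assumes gb: "is_gauss_borel M S H St" and perturb: "\<And>k l. M' k l = M k l + c l * M k (l + 2)"
    and "l + 2 \<le> N"
  shows "(\<Sum>k\<le>N. S N k * M' k l) = (if l + 2 = N then c l * H N else 0)"
proof -
  have "(\<Sum>k\<le>N. S N k * M' k l) = (\<Sum>k\<le>N. S N k * M k l) + c l * (\<Sum>k\<le>N. S N k * M k (l + 2))"
    by (simp add: perturb distrib_left sum.distrib sum_distrib_left mult.left_commute)
  with assms(3) show ?thesis
    by (simp add: is_gauss_borel_SM_atMost[OF gb])
qed

definition three_term_connection ::
  "(nat \<Rightarrow> nat \<Rightarrow> complex) \<Rightarrow> (nat \<Rightarrow> nat \<Rightarrow> complex) \<Rightarrow> (nat \<Rightarrow> complex) \<Rightarrow> bool" where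
  "three_term_connection S S' \<beta> \<longleftrightarrow>
     (\<forall>i j. S (i + 2) j = S' (i + 2) j + (S (i + 2) (i + 1) - S' (i + 2) (i + 1)) * S' (i + 1) j
                          + \<beta> i * S' i j)"

(* Row i + 2 of S minus the combination of rows of S' vanishes in the columns from i + 1 on and
   annihilates the first i + 1 columns of M'. *)
lemma is_gauss_borel_connection:
  fixes M M' :: "nat \<Rightarrow> nat \<Rightarrow> complex" and c :: "nat \<Rightarrow> complex"
  assumes tau': "\<forall>n. tau M' n \<noteq> 0"
    and gb: "is_gauss_borel M S H St" and gb': "is_gauss_borel M' S' H' St'"
    and perturb: "\<And>k l. M' k l = M k l + c l * M k (l + 2)"
  shows "three_term_connection S S' (\<lambda>i. c i * (H (i + 2) / H' i))"
  unfolding three_term_connection_def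
proof (intro allI)
  fix i j :: nat
  define N where "N = i + 2"
  define \<alpha> where "\<alpha> = S N (i + 1) - S' N (i + 1)"
  define \<beta> where "\<beta> = c i * (H N / H' i)"
  define Y where "Y k = S N k - S' N k - \<alpha> * S' (i + 1) k - \<beta> * S' i k" for k
  have Y_top: "Y k = 0" if "i + 1 \<le> k" for k
    using that by (cases "k \<le> N")
      (auto simp: Y_def \<alpha>_def N_def le_Suc_eq is_gauss_borel_S_diag[OF gb] is_gauss_borel_S_diag[OF gb']
        is_gauss_borel_S_upper[OF gb] is_gauss_borel_S_upper[OF gb'])
  have "(\<Sum>k<i + 1. Y k * M' k l) = 0" if "l < i + 1" for l
  proof -
    have l: "l + 2 \<le> N" "i \<le> N" "i + 1 \<le> N" "l \<le> i" "(l + 2 = N) = (l = i)"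
      using that by (auto simp: N_def)
    have "(\<Sum>k<i + 1. Y k * M' k l) = (\<Sum>k\<le>N. Y k * M' k l)"
      by (rule sum.mono_neutral_left) (auto simp: Y_top N_def)
    also have "\<dots> = (\<Sum>k\<le>N. S N k * M' k l) - (\<Sum>k\<le>N. S' N k * M' k l)
        - \<alpha> * (\<Sum>k\<le>N. S' (i + 1) k * M' k l) - \<beta> * (\<Sum>k\<le>N. S' i k * M' k l)"
      by (simp add: Y_def sum_subtractf sum_distrib_left left_diff_distrib mult.assoc)
    also have "\<dots> = (if l = i then c i * H N - \<beta> * H' i else 0)"
      using l is_gauss_borel_perturbed_SM[where M' = M' and c = c, OF gb perturb]
      by (simp add: is_gauss_borel_SM_atMost[OF gb'])
    also have "\<dots> = 0"
      using is_gauss_borel_H_nonzero[OF tau'[rule_format] gb'] by (simp add: \<beta>_def)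
    finally show ?thesis .
  qed
  then have "Y k = 0" if "k < i + 1" for k
    using det_nonzero_left_null[OF tau'[rule_format, of "i + 1", unfolded tau_def]] that by blast
  with Y_top have "Y j = 0"
    by (cases "j < i + 1") auto
  then show "S (i + 2) j = S' (i + 2) j + (S (i + 2) (i + 1) - S' (i + 2) (i + 1)) * S' (i + 1) j
      + c i * (H (i + 2) / H' i) * S' i j"
    by (simp add: Y_def \<alpha>_def \<beta>_def N_def algebra_simps)
qed

(* The right-hand sides involve only Sa and Sd, so the left-hand sides agree for any two routes
   from Sa to Sd. *)
lemma three_term_connection_compose:
  assumes ab: "three_term_connection Sa Sb \<beta>" and bd: "three_term_connection Sb Sd \<gamma>"
    and diag_b: "\<And>i. Sb i i = 1" and diag_d: "\<And>i. Sd i i = 1"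
  shows three_term_connection_compose_sub2:
      "(Sa (i + 2) (i + 1) - Sb (i + 2) (i + 1)) * (Sb (i + 1) i - Sd (i + 1) i) + \<beta> i + \<gamma> i
         = Sa (i + 2) i - Sd (i + 2) i - (Sa (i + 2) (i + 1) - Sd (i + 2) (i + 1)) * Sd (i + 1) i"
    and three_term_connection_compose_sub3:
      "(Sa (i + 3) (i + 2) - Sb (i + 3) (i + 2)) * \<gamma> i + \<beta> (i + 1) * (Sb (i + 1) i - Sd (i + 1) i)
         = Sa (i + 3) i - Sd (i + 3) i - (Sa (i + 3) (i + 2) - Sd (i + 3) (i + 2)) * Sd (i + 2) i
           - (Sa (i + 3) (i + 1) - Sd (i + 3) (i + 1) - (Sa (i + 3) (i + 2) - Sd (i + 3) (i + 2)) * Sd (i + 2) (i + 1))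
             * Sd (i + 1) i"
proof -
  have ab_row: "Sa (k + 2) j = Sb (k + 2) j + (Sa (k + 2) (k + 1) - Sb (k + 2) (k + 1)) * Sb (k + 1) j + \<beta> k * Sb k j"
    and bd_row: "Sb (k + 2) j = Sd (k + 2) j + (Sb (k + 2) (k + 1) - Sd (k + 2) (k + 1)) * Sd (k + 1) j + \<gamma> k * Sd k j"
    for k j
    using ab bd unfolding three_term_connection_def by blast+
  have sub2: "(Sa (k + 2) (k + 1) - Sb (k + 2) (k + 1)) * (Sb (k + 1) k - Sd (k + 1) k) + \<beta> k + \<gamma> k
      = Sa (k + 2) k - Sd (k + 2) k - (Sa (k + 2) (k + 1) - Sd (k + 2) (k + 1)) * Sd (k + 1) k" for k
    unfolding ab_row[of k k] bd_row[of k k] by (simp add: diag_b diag_d algebra_simps)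
  then show "(Sa (i + 2) (i + 1) - Sb (i + 2) (i + 1)) * (Sb (i + 1) i - Sd (i + 1) i) + \<beta> i + \<gamma> i
      = Sa (i + 2) i - Sd (i + 2) i - (Sa (i + 2) (i + 1) - Sd (i + 2) (i + 1)) * Sd (i + 1) i" .
  have a3: "Sa (i + 3) i = Sb (i + 3) i + (Sa (i + 3) (i + 2) - Sb (i + 3) (i + 2)) * Sb (i + 2) i
      + \<beta> (i + 1) * Sb (i + 1) i"
    and b3: "Sb (i + 3) i = Sd (i + 3) i + (Sb (i + 3) (i + 2) - Sd (i + 3) (i + 2)) * Sd (i + 2) i
      + \<gamma> (i + 1) * Sd (i + 1) i"
    and sub2': "Sa (i + 3) (i + 1) - Sd (i + 3) (i + 1) - (Sa (i + 3) (i + 2) - Sd (i + 3) (i + 2)) * Sd (i + 2) (i + 1)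
      = (Sa (i + 3) (i + 2) - Sb (i + 3) (i + 2)) * (Sb (i + 2) (i + 1) - Sd (i + 2) (i + 1))
        + \<beta> (i + 1) + \<gamma> (i + 1)"
    using ab_row[of "i + 1" i] bd_row[of "i + 1" i] sub2[of "i + 1"] by (simp_all add: numeral_3_eq_3)
  show "(Sa (i + 3) (i + 2) - Sb (i + 3) (i + 2)) * \<gamma> i + \<beta> (i + 1) * (Sb (i + 1) i - Sd (i + 1) i)
      = Sa (i + 3) i - Sd (i + 3) i - (Sa (i + 3) (i + 2) - Sd (i + 3) (i + 2)) * Sd (i + 2) i
        - (Sa (i + 3) (i + 1) - Sd (i + 3) (i + 1) - (Sa (i + 3) (i + 2) - Sd (i + 3) (i + 2)) * Sd (i + 2) (i + 1))
          * Sd (i + 1) i"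
    unfolding sub2' a3 b3 bd_row[of i i] by (simp add: diag_d algebra_simps)
qed

lemma gauss_borel_square:
  fixes Ma Mb Mc Md :: "nat \<Rightarrow> nat \<Rightarrow> complex" and c c' :: "nat \<Rightarrow> complex"
  assumes tau: "\<forall>n. tau Ma n \<noteq> 0" "\<forall>n. tau Mb n \<noteq> 0" "\<forall>n. tau Mc n \<noteq> 0" "\<forall>n. tau Md n \<noteq> 0"
    and ab: "\<And>k l. Mb k l = Ma k l + c l * Ma k (l + 2)"
    and bd: "\<And>k l. Md k l = Mb k l + c' l * Mb k (l + 2)"
    and ac: "\<And>k l. Mc k l = Ma k l + c' l * Ma k (l + 2)"
    and cd: "\<And>k l. Md k l = Mc k l + c l * Mc k (l + 2)"
  shows gauss_borel_square_S1:
      "(GB_S1 Ma (i + 1) - GB_S1 Mb (i + 1)) * (GB_S1 Mb i - GB_S1 Md i)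
         + c i * (GB_H Ma (i + 2) / GB_H Mb i) + c' i * (GB_H Mb (i + 2) / GB_H Md i)
       = (GB_S1 Ma (i + 1) - GB_S1 Mc (i + 1)) * (GB_S1 Mc i - GB_S1 Md i)
         + c' i * (GB_H Ma (i + 2) / GB_H Mc i) + c i * (GB_H Mc (i + 2) / GB_H Md i)"
    and gauss_borel_square_S2:
      "(GB_S1 Ma (i + 2) - GB_S1 Mb (i + 2)) * (c' i * (GB_H Mb (i + 2) / GB_H Md i))
         + c (i + 1) * (GB_H Ma (i + 3) / GB_H Mb (i + 1)) * (GB_S1 Mb i - GB_S1 Md i)
       = (GB_S1 Ma (i + 2) - GB_S1 Mc (i + 2)) * (c i * (GB_H Mc (i + 2) / GB_H Md i))
         + c' (i + 1) * (GB_H Ma (i + 3) / GB_H Mc (i + 1)) * (GB_S1 Mc i - GB_S1 Md i)"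
proof -
  let ?S = "\<lambda>M. fst (gauss_borel M)"
  have gb: "is_gauss_borel M (?S M) (GB_H M) (snd (snd (gauss_borel M)))"
    if "\<forall>n. tau M n \<noteq> 0" for M
    using is_gauss_borel_gauss_borel[OF that] .
  have diag: "?S M i i = 1" if "\<forall>n. tau M n \<noteq> 0" for M i
    using is_gauss_borel_S_diag[OF gb[OF that]] .
  have conn: "three_term_connection (?S M) (?S M') (\<lambda>i. c i * (GB_H M (i + 2) / GB_H M' i))"
    if "\<forall>n. tau M n \<noteq> 0" "\<forall>n. tau M' n \<noteq> 0" "\<And>k l. M' k l = M k l + c l * M k (l + 2)"
    for M M' c
    by (rule is_gauss_borel_connection[OF that(2) gb[OF that(1)] gb[OF that(2)]]) (rule that(3))
  note route_b = three_term_connection_compose[OF conn[of Ma Mb c, OF tau(1,2) ab] conn[of Mb Md c', OF tau(2,4) bd]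
      diag[OF tau(2)] diag[OF tau(4)]]
  note route_c = three_term_connection_compose[OF conn[of Ma Mc c', OF tau(1,3) ac] conn[of Mc Md c, OF tau(3,4) cd]
      diag[OF tau(3)] diag[OF tau(4)]]
  show "(GB_S1 Ma (i + 1) - GB_S1 Mb (i + 1)) * (GB_S1 Mb i - GB_S1 Md i)
         + c i * (GB_H Ma (i + 2) / GB_H Mb i) + c' i * (GB_H Mb (i + 2) / GB_H Md i)
       = (GB_S1 Ma (i + 1) - GB_S1 Mc (i + 1)) * (GB_S1 Mc i - GB_S1 Md i)
         + c' i * (GB_H Ma (i + 2) / GB_H Mc i) + c i * (GB_H Mc (i + 2) / GB_H Md i)"
    using route_b(1)[of i] route_c(1)[of i] by (simp add: GB_S1_def)
  show "(GB_S1 Ma (i + 2) - GB_S1 Mb (i + 2)) * (c' i * (GB_H Mb (i + 2) / GB_H Md i))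
         + c (i + 1) * (GB_H Ma (i + 3) / GB_H Mb (i + 1)) * (GB_S1 Mb i - GB_S1 Md i)
       = (GB_S1 Ma (i + 2) - GB_S1 Mc (i + 2)) * (c i * (GB_H Mc (i + 2) / GB_H Md i))
         + c' (i + 1) * (GB_H Ma (i + 3) / GB_H Mc (i + 1)) * (GB_S1 Mc i - GB_S1 Md i)"
    using route_b(2)[of i] route_c(2)[of i] by (simp add: GB_S1_def numeral_3_eq_3)
qed

section \<open>Shifting the hypergeometric parameters\<close>

lemma pochhammer_plus_1:
  fixes b :: "'a :: field"
  assumes "b \<noteq> 0"
  shows "pochhammer (b + 1) k = (1 + of_nat k / b) * pochhammer b k"
proof -
  have "b * pochhammer (b + 1) k = (b + of_nat k) * pochhammer b k"
    using pochhammer_rec[of b k] pochhammer_rec'[of b k] by simp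
  with assms show ?thesis
    by (simp add: field_simps)
qed

lemma prod_list_pochhammer_update:
  fixes xs :: "'a :: field list"
  assumes "r < length xs" "xs ! r \<noteq> 0"
  shows "(\<Prod>x\<leftarrow>xs[r := xs ! r + 1]. pochhammer x k) = (1 + of_nat k / xs ! r) * (\<Prod>x\<leftarrow>xs. pochhammer x k)"
  using assms
proof (induction xs arbitrary: r)
  case (Cons a xs)
  then show ?case
    by (cases r) (simp_all add: pochhammer_plus_1 mult.left_commute)
qed simp

lemma hweight_update_numerator:
  assumes "r < length bs" "bs ! r \<noteq> 0"
  shows "hweight (bs[r := bs ! r + 1]) cs e k = (1 + of_nat k / bs ! r) * hweight bs cs e k"
  using prod_list_pochhammer_update[OF assms] by (simp add: hweight_def)

lemma hweight_update_denominator: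
  assumes s: "s < length cs" and d: "cs ! s - 1 \<noteq> 0" and nz: "(\<Prod>c\<leftarrow>cs. pochhammer c k) \<noteq> 0"
  shows "hweight bs (cs[s := cs ! s - 1]) e k = (1 + of_nat k / (cs ! s - 1)) * hweight bs cs e k"
proof -
  let ?cs = "cs[s := cs ! s - 1]"
  have "?cs[s := ?cs ! s + 1] = cs"
    using s by simp
  then have "(\<Prod>c\<leftarrow>cs. pochhammer c k) = (1 + of_nat k / (cs ! s - 1)) * (\<Prod>c\<leftarrow>?cs. pochhammer c k)"
    using prod_list_pochhammer_update[of s ?cs k] s d by simp
  with nz show ?thesis
    by (simp add: hweight_def)
qed

lemma hweight_eq_0:
  assumes "0 \<in> set bs" "0 < k"
  shows "hweight bs cs e k = 0"
proof -
  have "0 \<in> set (map (\<lambda>b. pochhammer b k) bs)"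
    using assms by (force simp: pochhammer_0_left)
  then show ?thesis
    by (simp add: hweight_def)
qed

lemma mom_term_column_add_2:
  "mom_term b1 b2 cs e1 e2 i (j + 2) k = of_nat k * mom_term b1 b2 cs e1 e2 i j k"
  by (simp add: mom_term_def)

lemma moment_perturbation:
  assumes "\<And>k. mom_term b1' b2' cs' e1 e2 i j k = (1 + c * of_nat k) * mom_term b1 b2 cs e1 e2 i j k"
    and "summable (mom_term b1 b2 cs e1 e2 i j)" and "summable (mom_term b1 b2 cs e1 e2 i (j + 2))"
  shows "moment b1' b2' cs' e1 e2 i j = moment b1 b2 cs e1 e2 i j + c * moment b1 b2 cs e1 e2 i (j + 2)"
proof -
  have "mom_term b1' b2' cs' e1 e2 i j
      = (\<lambda>k. mom_term b1 b2 cs e1 e2 i j k + c * mom_term b1 b2 cs e1 e2 i (j + 2) k)"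
    unfolding fun_eq_iff mom_term_column_add_2 using assms(1) by (simp add: algebra_simps)
  then show ?thesis
    unfolding moment_def
    using suminf_add[OF assms(2) summable_mult[OF assms(3)]] suminf_mult[OF assms(3)] by simp
qed

lemma tau_nonzero_column:
  fixes M :: "nat \<Rightarrow> nat \<Rightarrow> complex"
  assumes "tau M n \<noteq> 0" "j < n"
  shows "\<exists>i. M i j \<noteq> 0"
proof (rule ccontr)
  assume "\<not> (\<exists>i. M i j \<noteq> 0)"
  then have "\<forall>k<n. (\<Sum>l<n. M k l * (if l = j then 1 else 0)) = 0"
    by (simp add: if_distrib cong: if_cong)
  from det_nonzero_right_null[OF assms(1)[unfolded tau_def] this] assms(2) show False
    by auto
qed

(* Column 2 rather than column 0 is used because its terms carry the factor k^(i+1), which kills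
   the term k = 0, where the weight does not vanish. *)
lemma standing_assms_b1_nonzero:
  assumes sa: "standing_assms b1 b2 cs e1 e2"
  shows "0 \<notin> set b1"
proof
  assume "0 \<in> set b1"
  then have "mom_term b1 b2 cs e1 e2 i 2 k = 0" for i k
    by (cases "k = 0") (simp_all add: mom_term_def hweight_eq_0)
  then have "moment b1 b2 cs e1 e2 i 2 = 0" for i
    by (simp add: moment_def)
  with sa tau_nonzero_column[of "moment b1 b2 cs e1 e2" 3 2] show False
    by (simp add: standing_assms_def)
qed

lemma standing_assms_b2_nonzero:
  assumes sa: "standing_assms b1 b2 cs e1 e2"
  shows "0 \<notin> set b2"
proof
  assume "0 \<in> set b2"
  then have "mom_term b1 b2 cs e1 e2 i 3 k = 0" for i k
    by (cases "k = 0") (simp_all add: mom_term_def hweight_eq_0)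
  then have "moment b1 b2 cs e1 e2 i 3 = 0" for i
    by (simp add: moment_def)
  with sa tau_nonzero_column[of "moment b1 b2 cs e1 e2" 4 3] show False
    by (simp add: standing_assms_def)
qed

lemma standing_assms_cs_nonzero:
  assumes "standing_assms b1 b2 cs e1 e2"
  shows "0 \<notin> set cs"
proof
  assume "0 \<in> set cs"
  then have "(\<Prod>c\<leftarrow>cs. pochhammer c 1) = 0"
    by force
  with assms show False
    unfolding standing_assms_def by blast
qed

lemma moment_update_b1:
  assumes sa: "standing_assms b1 b2 cs e1 e2" and r: "r < length b1"
  shows "moment (b1[r := b1 ! r + 1]) b2 cs e1 e2 i j
       = moment b1 b2 cs e1 e2 i j + (if even j then 1 / b1 ! r else 0) * moment b1 b2 cs e1 e2 i (j + 2)"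
proof (rule moment_perturbation)
  have "b1 ! r \<noteq> 0"
    using standing_assms_b1_nonzero[OF sa] nth_mem[OF r] by auto
  with r show "mom_term (b1[r := b1 ! r + 1]) b2 cs e1 e2 i j k
      = (1 + (if even j then 1 / b1 ! r else 0) * of_nat k) * mom_term b1 b2 cs e1 e2 i j k" for k
    by (simp add: mom_term_def hweight_update_numerator)
qed (use sa in \<open>simp_all add: standing_assms_def\<close>)

lemma moment_update_b2:
  assumes sa: "standing_assms b1 b2 cs e1 e2" and q: "q < length b2"
  shows "moment b1 (b2[q := b2 ! q + 1]) cs e1 e2 i j
       = moment b1 b2 cs e1 e2 i j + (if odd j then 1 / b2 ! q else 0) * moment b1 b2 cs e1 e2 i (j + 2)"
proof (rule moment_perturbation)
  have "b2 ! q \<noteq> 0"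
    using standing_assms_b2_nonzero[OF sa] nth_mem[OF q] by auto
  with q show "mom_term b1 (b2[q := b2 ! q + 1]) cs e1 e2 i j k
      = (1 + (if odd j then 1 / b2 ! q else 0) * of_nat k) * mom_term b1 b2 cs e1 e2 i j k" for k
    by (simp add: mom_term_def hweight_update_numerator)
qed (use sa in \<open>simp_all add: standing_assms_def\<close>)

lemma moment_update_cs:
  assumes sa: "standing_assms b1 b2 cs e1 e2" and sa': "standing_assms b1 b2 (cs[s := cs ! s - 1]) e1 e2"
    and s: "s < length cs"
  shows "moment b1 b2 (cs[s := cs ! s - 1]) e1 e2 i j
       = moment b1 b2 cs e1 e2 i j + 1 / (cs ! s - 1) * moment b1 b2 cs e1 e2 i (j + 2)"
proof (rule moment_perturbation)
  have "cs ! s - 1 \<noteq> 0"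
    using standing_assms_cs_nonzero[OF sa'] nth_mem[of s "cs[s := cs ! s - 1]"] s by force
  with s sa show "mom_term b1 b2 (cs[s := cs ! s - 1]) e1 e2 i j k
      = (1 + 1 / (cs ! s - 1) * of_nat k) * mom_term b1 b2 cs e1 e2 i j k" for k
    by (simp add: mom_term_def hweight_update_denominator standing_assms_def)
qed (use sa in \<open>simp_all add: standing_assms_def\<close>)

theorem mainTheorem2:
  fixes b1 b2 cs :: "complex list" and e1 e2 :: complex and r q s n :: nat
    and B1 B2 C :: "nat \<Rightarrow> complex list"
    and u v f g :: "nat \<Rightarrow> nat \<Rightarrow> nat \<Rightarrow> nat \<Rightarrow> complex"
    and dh dc dt :: complex
  assumes r: "r < length b1" and q: "q < length b2" and s: "s < length cs"
  defines "B1 \<equiv> \<lambda>a. if a = 0 then b1 else b1[r := b1 ! r + 1]"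
      and "B2 \<equiv> \<lambda>a. if a = 0 then b2 else b2[q := b2 ! q + 1]"
      and "C \<equiv> \<lambda>a. if a = 0 then cs else cs[s := cs ! s - 1]"
  assumes sa: "\<And>h k t. h \<le> 1 \<Longrightarrow> k \<le> 1 \<Longrightarrow> t \<le> 1 \<Longrightarrow> standing_assms (B1 h) (B2 k) (C t) e1 e2"
  defines "u \<equiv> \<lambda>h k t m. GB_H (moment (B1 h) (B2 k) (C t) e1 e2) (2 * m)"
      and "v \<equiv> \<lambda>h k t m. GB_H (moment (B1 h) (B2 k) (C t) e1 e2) (2 * m + 1)"
      and "f \<equiv> \<lambda>h k t m. GB_S1 (moment (B1 h) (B2 k) (C t) e1 e2) (2 * m)"
      and "g \<equiv> \<lambda>h k t m. GB_S1 (moment (B1 h) (B2 k) (C t) e1 e2) (2 * m + 1)"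
      and "dh \<equiv> b1 ! r" and "dc \<equiv> b2 ! q" and "dt \<equiv> cs ! s - 1"
  shows
   "(g 0 0 0 n * (f 0 0 1 n - f 1 0 0 n) + g 0 0 1 n * (f 1 0 1 n - f 0 0 1 n) + g 1 0 0 n * (f 1 0 0 n - f 1 0 1 n)
       = 1/dt * (u 1 0 0 (Suc n) / u 1 0 1 n - u 0 0 0 (Suc n) / u 0 0 1 n)
         + 1/dh * (u 0 0 0 (Suc n) / u 1 0 0 n - u 0 0 1 (Suc n) / u 1 0 1 n)) \<and>
    (f 0 0 0 (Suc n) * (g 1 0 0 n - g 0 0 1 n) + f 0 0 1 (Suc n) * (g 0 0 1 n - g 1 0 1 n) + f 1 0 0 (Suc n) * (g 1 0 1 n - g 1 0 0 n)
       = 1/dt * (v 0 0 0 (Suc n) / v 0 0 1 n - v 1 0 0 (Suc n) / v 1 0 1 n)) \<and>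
    (1/dt * (u 1 0 0 (Suc n) / u 1 0 1 n) * (f 1 0 0 (Suc n) - f 0 0 0 (Suc n))
       + 1/dh * (u 0 0 1 (Suc n) / u 1 0 1 n) * (f 0 0 0 (Suc n) - f 0 0 1 (Suc n))
       + 1/dt * (v 0 0 0 (Suc n) / v 0 0 1 n) * (f 0 0 1 n - f 1 0 1 n) = 0) \<and>
    (1/dh * (u 0 0 0 (Suc (Suc n)) / u 1 0 0 (Suc n)) * (g 1 0 0 n - g 1 0 1 n)
       + 1/dt * (u 0 0 0 (Suc (Suc n)) / u 0 0 1 (Suc n)) * (g 1 0 1 n - g 0 0 1 n)
       + 1/dt * (v 1 0 0 (Suc n) / v 1 0 1 n) * (g 0 0 0 (Suc n) - g 1 0 0 (Suc n)) = 0) \<and>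
    (g 0 0 0 n * (f 0 0 1 n - f 0 1 0 n) + g 0 0 1 n * (f 0 1 1 n - f 0 0 1 n) + g 0 1 0 n * (f 0 1 0 n - f 0 1 1 n)
       = 1/dt * (u 0 1 0 (Suc n) / u 0 1 1 n - u 0 0 0 (Suc n) / u 0 0 1 n)) \<and>
    (f 0 0 0 (Suc n) * (g 0 0 1 n - g 0 1 0 n) + f 0 0 1 (Suc n) * (g 0 1 1 n - g 0 0 1 n) + f 0 1 0 (Suc n) * (g 0 1 0 n - g 0 1 1 n)
       = 1/dt * (v 0 1 0 (Suc n) / v 0 1 1 n - v 0 0 0 (Suc n) / v 0 0 1 n)
         + 1/dc * (v 0 0 0 (Suc n) / v 0 1 0 n - v 0 0 1 (Suc n) / v 0 1 1 n)) \<and>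
    (1/dt * (u 0 1 0 (Suc n) / u 0 1 1 n) * (f 0 0 0 (Suc n) - f 0 1 0 (Suc n))
       + 1/dc * (v 0 0 0 (Suc n) / v 0 1 0 n) * (f 0 1 0 n - f 0 1 1 n)
       + 1/dt * (v 0 0 0 (Suc n) / v 0 0 1 n) * (f 0 1 1 n - f 0 0 1 n) = 0) \<and>
    (1/dt * (u 0 0 0 (Suc (Suc n)) / u 0 0 1 (Suc n)) * (g 0 0 1 n - g 0 1 1 n)
       + 1/dc * (v 0 0 1 (Suc n) / v 0 1 1 n) * (g 0 0 0 (Suc n) - g 0 0 1 (Suc n))
       + 1/dt * (v 0 1 0 (Suc n) / v 0 1 1 n) * (g 0 1 0 (Suc n) - g 0 0 0 (Suc n)) = 0) \<and>
    (1/dh * (u 0 1 0 (Suc n) / u 1 1 0 n) * (f 0 0 0 (Suc n) - f 0 1 0 (Suc n))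
       + 1/dc * (v 0 0 0 (Suc n) / v 0 1 0 n) * (f 0 1 0 n - f 1 1 0 n) = 0) \<and>
    (1/dh * (u 0 0 0 (Suc (Suc n)) / u 1 0 0 (Suc n)) * (g 1 1 0 n - g 1 0 0 n)
       + 1/dc * (v 1 0 0 (Suc n) / v 1 1 0 n) * (g 1 0 0 (Suc n) - g 0 0 0 (Suc n)) = 0) \<and>
    (g 0 0 0 n * (f 0 1 0 n - f 1 0 0 n) + g 0 1 0 n * (f 1 1 0 n - f 0 1 0 n) + g 1 0 0 n * (f 1 0 0 n - f 1 1 0 n)
       = 1/dh * (u 0 0 0 (Suc n) / u 1 0 0 n - u 0 1 0 (Suc n) / u 1 1 0 n)) \<and>
    (f 0 0 0 (Suc n) * (g 0 1 0 n - g 1 0 0 n) + f 0 1 0 (Suc n) * (g 1 1 0 n - g 0 1 0 n) + f 1 0 0 (Suc n) * (g 1 0 0 n - g 1 1 0 n)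
       = 1/dc * (v 1 0 0 (Suc n) / v 1 1 0 n - v 0 0 0 (Suc n) / v 0 1 0 n))"
proof -
  define M where "M h k t = moment (B1 h) (B2 k) (C t) e1 e2" for h k t
  define c_hat c_check c_tilde :: "nat \<Rightarrow> complex"
    where "c_hat j = (if even j then 1 / dh else 0)" and "c_check j = (if odd j then 1 / dc else 0)"
      and "c_tilde j = 1 / dt" for j
  have tau: "\<forall>n. tau (M h k t) n \<noteq> 0" if "h \<le> 1" "k \<le> 1" "t \<le> 1" for h k t
    using sa[OF that] by (simp add: M_def standing_assms_def)
  have hat: "M 1 k t i j = M 0 k t i j + c_hat j * M 0 k t i (j + 2)" if "k \<le> 1" "t \<le> 1" for k t i j
    using moment_update_b1[of b1 "B2 k" "C t" e1 e2 r] sa[OF le0 that] r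
    by (simp add: M_def B1_def c_hat_def dh_def)
  have check: "M h 1 t i j = M h 0 t i j + c_check j * M h 0 t i (j + 2)" if "h \<le> 1" "t \<le> 1" for h t i j
    using moment_update_b2[of "B1 h" b2 "C t" e1 e2 q] sa[OF that(1) le0 that(2)] q
    by (simp add: M_def B2_def c_check_def dc_def)
  have tilde: "M h k 1 i j = M h k 0 i j + c_tilde j * M h k 0 i (j + 2)" if "h \<le> 1" "k \<le> 1" for h k i j
    using moment_update_cs[of "B1 h" "B2 k" cs e1 e2 s] sa[OF that le0] sa[OF that le_refl] s
    by (simp add: M_def C_def c_tilde_def dt_def)
  note hat_tilde = gauss_borel_square[where c = c_hat and c' = c_tilde,
      OF tau[OF le0 le0 le0] tau[OF le_refl le0 le0] tau[OF le0 le0 le_refl] tau[OF le_refl le0 le_refl]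
      hat[OF le0 le0] tilde[OF le_refl le0] tilde[OF le0 le0] hat[OF le0 le_refl]]
  note check_tilde = gauss_borel_square[where c = c_check and c' = c_tilde,
      OF tau[OF le0 le0 le0] tau[OF le0 le_refl le0] tau[OF le0 le0 le_refl] tau[OF le0 le_refl le_refl]
      check[OF le0 le0] tilde[OF le0 le_refl] tilde[OF le0 le0] check[OF le0 le_refl]]
  note hat_check = gauss_borel_square[where c = c_hat and c' = c_check,
      OF tau[OF le0 le0 le0] tau[OF le_refl le0 le0] tau[OF le0 le_refl le0] tau[OF le_refl le_refl le0]
      hat[OF le0 le0] check[OF le_refl le0] check[OF le0 le0] hat[OF le_refl le0]]
  have GB_uvfg: "GB_H (M h k t) j = (if even j then u h k t (j div 2) else v h k t (j div 2))"
    "GB_S1 (M h k t) j = (if even j then f h k t (j div 2) else g h k t (j div 2))" for h k t j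
    by (auto simp: u_def v_def f_def g_def M_def elim!: evenE oddE)
  show ?thesis
    using hat_tilde[of "2 * n"] hat_tilde[of "2 * n + 1"] check_tilde[of "2 * n"] check_tilde[of "2 * n + 1"]
      hat_check[of "2 * n"] hat_check[of "2 * n + 1"]
    by (simp add: GB_uvfg c_hat_def c_check_def c_tilde_def divide_inverse algebra_simps)
qed

end
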